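(* Let $P$ be a poset and $\mathcal D$ a meet-specification of $P$ with radius $\omega$. Let $X$ be the set of all non-empty finitely generated $\mathcal D$-filters of $P$, ordered by reverse inclusion, and $e_X:P\to X$, $p\mapsto p^\uparrow$, the corresponding meet-extension. If $L$ is a lattice and $f:P\to L$ is a $\mathcal D$-morphism, then $f$ has enough meets for $e_X$, i.e. $\bigwedge f[e_X^{-1}(x^\uparrow)]$ exists in $L$ for every $x\in X$.
   Context: $p^\uparrow=\{q\ge p\}$; $e^{-1}(Z)=\{p:e(p)\in Z\}$. A meet-specification of $P$ is a set $\mathcal D$ of subsets of $P$ such that $\bigwedge S$ exists in $P$ for each $S\in\mathcal D$ and $\{p\}\in\mathcal D$ for all $p\in P$; radius $\omega$ means every member is finite. A $\mathcal D$-filter is an upset $F$ with $\bigwedge S\in F$ whenever $S\in\mathcal D$, $S\subseteq F$; it is finitely generated if it is the smallest $\mathcal D$-filter containing some finite set. An order-preserving map $f$ is a $\mathcal D$-morphism if $f(\bigwedge S)=\bigwedge f[S]$ for all $S\in\mathcal D$. *)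

theory Defs
  imports Main
begin

text \<open>A poset is modelled as a carrier set P inside an ordered type, with the induced order.\<close>

definition is_glb_in :: "'a::order set \<Rightarrow> 'a set \<Rightarrow> 'a \<Rightarrow> bool" where
  "is_glb_in A S m \<longleftrightarrow> m \<in> A \<and> (\<forall>s\<in>S. m \<le> s) \<and> (\<forall>y\<in>A. (\<forall>s\<in>S. y \<le> s) \<longrightarrow> y \<le> m)"

definition meet_in :: "'a::order set \<Rightarrow> 'a set \<Rightarrow> 'a" where
  "meet_in A S = (THE m. is_glb_in A S m)"

definition up_in :: "'a::order set \<Rightarrow> 'a \<Rightarrow> 'a set" where
  "up_in A p = {q \<in> A. p \<le> q}"

definition meet_spec :: "'a::order set \<Rightarrow> 'a set set \<Rightarrow> bool" where
  "meet_spec P D \<longleftrightarrow> (\<forall>S\<in>D. S \<subseteq> P \<and> (\<exists>m. is_glb_in P S m)) \<and> (\<forall>p\<in>P. {p} \<in> D)"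

definition radius_omega :: "'a set set \<Rightarrow> bool" where
  "radius_omega D \<longleftrightarrow> (\<forall>S\<in>D. finite S)"

definition D_filter :: "'a::order set \<Rightarrow> 'a set set \<Rightarrow> 'a set \<Rightarrow> bool" where
  "D_filter P D F \<longleftrightarrow> F \<subseteq> P \<and> (\<forall>p\<in>F. \<forall>q\<in>P. p \<le> q \<longrightarrow> q \<in> F)
     \<and> (\<forall>S\<in>D. S \<subseteq> F \<longrightarrow> meet_in P S \<in> F)"

definition D_filter_gen :: "'a::order set \<Rightarrow> 'a set set \<Rightarrow> 'a set \<Rightarrow> 'a set" where
  "D_filter_gen P D G = P \<inter> \<Inter>{F. D_filter P D F \<and> G \<subseteq> F}"

definition fg_D_filter :: "'a::order set \<Rightarrow> 'a set set \<Rightarrow> 'a set \<Rightarrow> bool" where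
  "fg_D_filter P D F \<longleftrightarrow> D_filter P D F \<and> (\<exists>G. finite G \<and> G \<subseteq> P \<and> F = D_filter_gen P D G)"

definition X_fg :: "'a::order set \<Rightarrow> 'a set set \<Rightarrow> 'a set set" where
  "X_fg P D = {F. fg_D_filter P D F \<and> F \<noteq> {}}"

text \<open>Principal up-set of x in X w.r.t. reverse inclusion: {y in X. x \<ge>_X y}, i.e. y \<subseteq> x.\<close>
definition X_up :: "'a::order set \<Rightarrow> 'a set set \<Rightarrow> 'a set \<Rightarrow> 'a set set" where
  "X_up P D x = {y \<in> X_fg P D. y \<subseteq> x}"

definition e_X :: "'a::order set \<Rightarrow> 'a \<Rightarrow> 'a set" where
  "e_X P p = up_in P p"

definition is_glb :: "'b::order set \<Rightarrow> 'b \<Rightarrow> bool" where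
  "is_glb S m \<longleftrightarrow> (\<forall>s\<in>S. m \<le> s) \<and> (\<forall>y. (\<forall>s\<in>S. y \<le> s) \<longrightarrow> y \<le> m)"

definition D_morphism :: "'a::order set \<Rightarrow> 'a set set \<Rightarrow> ('a \<Rightarrow> 'b::order) \<Rightarrow> bool" where
  "D_morphism P D f \<longleftrightarrow> (\<forall>p\<in>P. \<forall>q\<in>P. p \<le> q \<longrightarrow> f p \<le> f q)
     \<and> (\<forall>S\<in>D. is_glb (f ` S) (f (meet_in P S)))"

end

theory Submission
  imports Defs
begin

text \<open>
  For a \<open>\<D>\<close>-filter \<open>x\<close>, the points \<open>p\<close> with \<open>p\<^sup>\<up> \<subseteq> x\<close> are exactly the elements of
  \<open>x\<close>, so the claim is that \<open>f[x]\<close> has a meet. If \<open>x\<close> is generated by a finite set \<open>G\<close>, which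
  may be taken non-empty by adding an element of \<open>x\<close> (\<open>L\<close> need not have a top), then \<open>f[x]\<close>
  and \<open>f[G]\<close> have the same lower bounds: for any lower bound \<open>c\<close> of \<open>f[G]\<close> the set
  \<open>{y. c \<le> f y}\<close> is a \<open>\<D>\<close>-filter containing \<open>G\<close>, because \<open>f\<close> preserves the meets in \<open>\<D>\<close>.
  Hence the finite meet of \<open>f[G]\<close> in \<open>L\<close> is the meet of \<open>f[x]\<close>.
\<close>

lemma is_glb_in_meet_in:
  assumes "is_glb_in P S m"
  shows "is_glb_in P S (meet_in P S)"
proof -
  have "m' = m" if "is_glb_in P S m'" for m'
    using assms that unfolding is_glb_in_def by (meson order.antisym)
  then show ?thesis
    unfolding meet_in_def using assms by (metis theI)
qed

lemma meet_spec_meet_in: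
  assumes "meet_spec P D" and "S \<in> D"
  shows "is_glb_in P S (meet_in P S)"
  using assms is_glb_in_meet_in unfolding meet_spec_def by blast

lemma D_filter_gen_least:
  assumes "D_filter P D F" and "G \<subseteq> F"
  shows "D_filter_gen P D G \<subseteq> F"
  using assms unfolding D_filter_gen_def by blast

lemma D_filter_gen_mono:
  assumes "G \<subseteq> H"
  shows "D_filter_gen P D G \<subseteq> D_filter_gen P D H"
  using assms unfolding D_filter_gen_def by blast

lemma subset_D_filter_gen:
  assumes "G \<subseteq> P"
  shows "G \<subseteq> D_filter_gen P D G"
  using assms unfolding D_filter_gen_def by blast

lemma D_filter_gen_insert:
  assumes "G \<subseteq> P" and "D_filter P D (D_filter_gen P D G)" and "p \<in> D_filter_gen P D G"
  shows "D_filter_gen P D (insert p G) = D_filter_gen P D G"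
proof
  show "D_filter_gen P D (insert p G) \<subseteq> D_filter_gen P D G"
    using assms subset_D_filter_gen[OF assms(1)] by (intro D_filter_gen_least) auto
qed (rule D_filter_gen_mono, blast)

lemma D_filter_up_in:
  assumes "meet_spec P D" and "p \<in> P"
  shows "D_filter P D (up_in P p)"
  unfolding D_filter_def
proof (intro conjI ballI impI)
  fix S assume "S \<in> D" and "S \<subseteq> up_in P p"
  with assms show "meet_in P S \<in> up_in P p"
    using meet_spec_meet_in unfolding is_glb_in_def up_in_def by blast
qed (auto simp: up_in_def intro: order.trans)

lemma up_in_eq_D_filter_gen:
  assumes "meet_spec P D" and "p \<in> P"
  shows "up_in P p = D_filter_gen P D {p}"
proof
  show "up_in P p \<subseteq> D_filter_gen P D {p}"
    using assms(2) unfolding D_filter_gen_def D_filter_def up_in_def by blast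
  show "D_filter_gen P D {p} \<subseteq> up_in P p"
    using assms by (intro D_filter_gen_least D_filter_up_in) (auto simp: up_in_def)
qed

lemma up_in_in_X_fg:
  assumes "meet_spec P D" and "p \<in> P"
  shows "up_in P p \<in> X_fg P D"
proof -
  have "p \<in> up_in P p"
    using assms(2) unfolding up_in_def by simp
  moreover have "fg_D_filter P D (up_in P p)"
    unfolding fg_D_filter_def
    using D_filter_up_in[OF assms] up_in_eq_D_filter_gen[OF assms] assms(2) by blast
  ultimately show ?thesis
    unfolding X_fg_def by blast
qed

lemma e_X_preimage_X_up:
  assumes "meet_spec P D" and "x \<in> X_fg P D"
  shows "{p \<in> P. e_X P p \<in> X_up P D x} = x"
proof -
  have "D_filter P D x"
    using assms(2) unfolding X_fg_def fg_D_filter_def by blast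
  then have "x \<subseteq> P" and "\<And>p. p \<in> P \<Longrightarrow> up_in P p \<subseteq> x \<longleftrightarrow> p \<in> x"
    unfolding D_filter_def up_in_def by auto
  then show ?thesis
    unfolding e_X_def X_up_def using up_in_in_X_fg[OF assms(1)] by auto
qed

lemma D_morphism_lower_bound_filter:
  assumes "meet_spec P D" and "D_morphism P D f"
  shows "D_filter P D {y \<in> P. c \<le> f y}"
  unfolding D_filter_def
proof (intro conjI ballI impI)
  fix S assume S: "S \<in> D" "S \<subseteq> {y \<in> P. c \<le> f y}"
  then have "meet_in P S \<in> P"
    using assms(1) meet_spec_meet_in unfolding is_glb_in_def by blast
  moreover have "is_glb (f ` S) (f (meet_in P S))"
    using assms(2) S(1) unfolding D_morphism_def by blast
  ultimately show "meet_in P S \<in> {y \<in> P. c \<le> f y}"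
    using S(2) unfolding is_glb_def by blast
qed (use assms(2) in \<open>auto simp: D_morphism_def intro: order.trans\<close>)

lemma is_glb_image_D_filter_gen:
  assumes "meet_spec P D" and "D_morphism P D f"
    and "G \<subseteq> P" and glb: "is_glb (f ` G) m"
  shows "is_glb (f ` D_filter_gen P D G) m"
  unfolding is_glb_def
proof (intro conjI allI impI ballI)
  have "G \<subseteq> {y \<in> P. m \<le> f y}"
    using assms(3) glb unfolding is_glb_def by blast
  then have "D_filter_gen P D G \<subseteq> {y \<in> P. m \<le> f y}"
    using D_morphism_lower_bound_filter[OF assms(1,2)] D_filter_gen_least by blast
  then show "m \<le> s" if "s \<in> f ` D_filter_gen P D G" for s
    using that by blast
next
  fix c assume "\<forall>s\<in>f ` D_filter_gen P D G. c \<le> s"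
  then have "\<forall>s\<in>f ` G. c \<le> s"
    using subset_D_filter_gen[OF assms(3)] by blast
  then show "c \<le> m"
    using glb unfolding is_glb_def by blast
qed

lemma is_glb_Inf_fin:
  fixes A :: "'b::lattice set"
  assumes "finite A" and "A \<noteq> {}"
  shows "is_glb A (Inf_fin A)"
  using assms unfolding is_glb_def by (auto intro: Inf_fin.coboundedI simp: Inf_fin.bounded_iff)

theorem lemma9p4:
  fixes P :: "'a::order set" and D :: "'a set set" and f :: "'a \<Rightarrow> 'b::lattice"
  assumes "meet_spec P D" and "radius_omega D"
    and "D_morphism P D f"
    and "x \<in> X_fg P D"
  shows "\<exists>m. is_glb (f ` {p \<in> P. e_X P p \<in> X_up P D x}) m"
proof -
  obtain G where G: "finite G" "G \<subseteq> P" and x: "x = D_filter_gen P D G"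
    and "D_filter P D x" and "x \<noteq> {}"
    using assms(4) unfolding X_fg_def fg_D_filter_def by blast
  from \<open>x \<noteq> {}\<close> \<open>D_filter P D x\<close> obtain p where "p \<in> x" and "p \<in> P"
    unfolding D_filter_def by auto
  define H where "H = insert p G"
  have "H \<subseteq> P"
    using G(2) \<open>p \<in> P\<close> unfolding H_def by blast
  moreover have "x = D_filter_gen P D H"
    using D_filter_gen_insert[OF G(2)] \<open>D_filter P D x\<close> \<open>p \<in> x\<close>
    unfolding H_def x by simp
  moreover have "is_glb (f ` H) (Inf_fin (f ` H))"
    using G(1) unfolding H_def by (intro is_glb_Inf_fin) auto
  ultimately have "is_glb (f ` x) (Inf_fin (f ` H))"
    using is_glb_image_D_filter_gen[OF assms(1,3)] by simp
  then show ?thesis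
    using e_X_preimage_X_up[OF assms(1,4)] by auto
qed

end
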